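(* Let $\Omega\subset\mathbb{R}^n$ be a bounded open convex set with smooth boundary, let $\Lambda>0$, and let $u$ be a nonconstant continuous viscosity solution of $(N_\Lambda)$. Let $\Omega_1\subset\Omega$ be an open connected set and $m>0$ a constant such that $u\ge m$ on $\overline{\Omega_1}$. Then $u>m$ in $\Omega_1$.
   Context: $\nu$ denotes the outer unit normal to $\partial\Omega$, and $\Delta_\infty u=\sum_{i,j=1}^n u_{x_i}u_{x_ix_j}u_{x_j}$. For $\Lambda\ge 0$, problem $(N_\Lambda)$ is $$\min\{|\nabla u|-\Lambda|u|,-\Delta_\infty u\}=0 \text{ in }\{u>0\}\cap\Omega,\quad \max\{\Lambda|u|-|\nabla u|,-\Delta_\infty u\}=0 \text{ in }\{u<0\}\cap\Omega,\quad -\Delta_\infty u=0 \text{ in }\{u=0\}\cap\Omega,\quad \tfrac{\partial u}{\partial\nu}=0 \text{ on }\partial\Omega,$$ understood in the viscosity sense as follows. For $s\in\mathbb{R}$, $\xi\in\mathbb{R}^n$, $X$ a symmetric $n\times n$ matrix, let $F(s,\xi,X)=\min\{|\xi|-\Lambda|s|,-\langle X\xi,\xi\rangle\}$, $G(s,\xi,X)=\max\{\Lambda|s|-|\xi|,-\langle X\xi,\xi\rangle\}$, $H(X)=-\langle X\xi,\xi\rangle$ (evaluated at the same $\xi$). For a function $u$ and point $x_0$, let $E$ denote $F$ if $u(x_0)>0$, $G$ if $u(x_0)<0$, $H$ if $u(x_0)=0$. An upper semicontinuous $u$ on $\overline\Omega$ is a viscosity subsolution if: for every $x_0\in\Omega$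 and $\phi\in C^2(\Omega)$ with $\phi(x_0)=u(x_0)$ and $u(x)<\phi(x)$ for $x\neq x_0$, one has $E(\phi(x_0),\nabla\phi(x_0),\nabla^2\phi(x_0))\le 0$; and for every $x_0\in\partial\Omega$ and $\phi\in C^2(\overline\Omega)$ with the same touching property, $\min\{E(\phi(x_0),\nabla\phi(x_0),\nabla^2\phi(x_0)),\frac{\partial\phi}{\partial\nu}(x_0)\}\le 0$. A lower semicontinuous $u$ is a viscosity supersolution if the same holds with $u(x)>\phi(x)$ for $x\ne x_0$, with "$E\le 0$" replaced by "$E\ge 0$" at interior points and with $\max\{E(\phi(x_0),\nabla\phi(x_0),\nabla^2\phi(x_0)),\frac{\partial\phi}{\partial\nu}(x_0)\}\ge 0$ at boundary points. A continuous $u$ is a viscosity solution if it is both a sub- and a supersolution. *)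

theory Defs
  imports "HOL-Analysis.Analysis"
begin

definition grad :: "('a::euclidean_space \<Rightarrow> real) \<Rightarrow> 'a \<Rightarrow> 'a" where
  "grad f x = (SOME g. (f has_derivative (\<lambda>h. g \<bullet> h)) (at x))"

text \<open>Hessian as a linear map; the quadratic form X xi . xi is (hess f x xi) . xi\<close>
definition hess :: "('a::euclidean_space \<Rightarrow> real) \<Rightarrow> 'a \<Rightarrow> ('a \<Rightarrow> 'a)" where
  "hess f x = (SOME H. (grad f has_derivative H) (at x))"

fun Ck_on :: "nat \<Rightarrow> 'a::euclidean_space set \<Rightarrow> ('a \<Rightarrow> real) \<Rightarrow> bool" where
  "Ck_on 0 S f = continuous_on S f"
| "Ck_on (Suc k) S f = ((\<forall>x\<in>S. f differentiable (at x)) \<and>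
                        (\<forall>v. Ck_on k S (\<lambda>x. grad f x \<bullet> v)))"

definition smooth_on :: "'a::euclidean_space set \<Rightarrow> ('a \<Rightarrow> real) \<Rightarrow> bool" where
  "smooth_on S f = (\<forall>k. Ck_on k S f)"

definition C2_closure :: "'a::euclidean_space set \<Rightarrow> ('a \<Rightarrow> real) \<Rightarrow> bool" where
  "C2_closure \<Omega> f = (\<exists>U. open U \<and> closure \<Omega> \<subseteq> U \<and> Ck_on 2 U f)"

definition local_defining_fun :: "'a::euclidean_space set \<Rightarrow> 'a \<Rightarrow> real \<Rightarrow> ('a \<Rightarrow> real) \<Rightarrow> bool" where
  "local_defining_fun \<Omega> x0 r \<rho> =
     (r > 0 \<and> smooth_on (ball x0 r) \<rho> \<and> (\<forall>x\<in>ball x0 r. grad \<rho> x \<noteq> 0) \<and>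
      \<Omega> \<inter> ball x0 r = {x \<in> ball x0 r. \<rho> x < 0})"

definition smooth_boundary :: "'a::euclidean_space set \<Rightarrow> bool" where
  "smooth_boundary \<Omega> = (\<forall>x0\<in>frontier \<Omega>. \<exists>r \<rho>. local_defining_fun \<Omega> x0 r \<rho>)"

definition outer_normal :: "'a::euclidean_space set \<Rightarrow> 'a \<Rightarrow> 'a" where
  "outer_normal \<Omega> x0 = (SOME \<nu>. \<exists>r \<rho>. local_defining_fun \<Omega> x0 r \<rho> \<and>
                              \<nu> = grad \<rho> x0 /\<^sub>R norm (grad \<rho> x0))"

definition normal_deriv :: "'a::euclidean_space set \<Rightarrow> ('a \<Rightarrow> real) \<Rightarrow> 'a \<Rightarrow> real" where
  "normal_deriv \<Omega> \<phi> x0 = grad \<phi> x0 \<bullet> outer_normal \<Omega> x0"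

definition opF :: "real \<Rightarrow> real \<Rightarrow> 'a::euclidean_space \<Rightarrow> ('a \<Rightarrow> 'a) \<Rightarrow> real" where
  "opF \<Lambda> s \<xi> X = min (norm \<xi> - \<Lambda> * \<bar>s\<bar>) (- (X \<xi> \<bullet> \<xi>))"

definition opG :: "real \<Rightarrow> real \<Rightarrow> 'a::euclidean_space \<Rightarrow> ('a \<Rightarrow> 'a) \<Rightarrow> real" where
  "opG \<Lambda> s \<xi> X = max (\<Lambda> * \<bar>s\<bar> - norm \<xi>) (- (X \<xi> \<bullet> \<xi>))"

definition opH :: "'a::euclidean_space \<Rightarrow> ('a \<Rightarrow> 'a) \<Rightarrow> real" where
  "opH \<xi> X = - (X \<xi> \<bullet> \<xi>)"

text \<open>E chosen according to the sign of u(x0) = phi(x0)\<close>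
definition opE :: "real \<Rightarrow> real \<Rightarrow> 'a::euclidean_space \<Rightarrow> ('a \<Rightarrow> 'a) \<Rightarrow> real" where
  "opE \<Lambda> s \<xi> X = (if s > 0 then opF \<Lambda> s \<xi> X else if s < 0 then opG \<Lambda> s \<xi> X else opH \<xi> X)"

definition usc_on :: "'a::euclidean_space set \<Rightarrow> ('a \<Rightarrow> real) \<Rightarrow> bool" where
  "usc_on S u = (\<forall>x\<in>S. \<forall>e>0. \<forall>\<^sub>F y in at x within S. u y < u x + e)"

definition lsc_on :: "'a::euclidean_space set \<Rightarrow> ('a \<Rightarrow> real) \<Rightarrow> bool" where
  "lsc_on S u = (\<forall>x\<in>S. \<forall>e>0. \<forall>\<^sub>F y in at x within S. u y > u x - e)"

definition visc_subsol :: "real \<Rightarrow> 'a::euclidean_space set \<Rightarrow> ('a \<Rightarrow> real) \<Rightarrow> bool" where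
  "visc_subsol \<Lambda> \<Omega> u =
    (usc_on (closure \<Omega>) u \<and>
     (\<forall>x0\<in>\<Omega>. \<forall>\<phi>. Ck_on 2 \<Omega> \<phi> \<and> \<phi> x0 = u x0 \<and> (\<forall>x\<in>\<Omega>. x \<noteq> x0 \<longrightarrow> u x < \<phi> x)
        \<longrightarrow> opE \<Lambda> (\<phi> x0) (grad \<phi> x0) (hess \<phi> x0) \<le> 0) \<and>
     (\<forall>x0\<in>frontier \<Omega>. \<forall>\<phi>. C2_closure \<Omega> \<phi> \<and> \<phi> x0 = u x0 \<and>
          (\<forall>x\<in>closure \<Omega>. x \<noteq> x0 \<longrightarrow> u x < \<phi> x)
        \<longrightarrow> min (opE \<Lambda> (\<phi> x0) (grad \<phi> x0) (hess \<phi> x0)) (normal_deriv \<Omega> \<phi> x0) \<le> 0))"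

definition visc_supersol :: "real \<Rightarrow> 'a::euclidean_space set \<Rightarrow> ('a \<Rightarrow> real) \<Rightarrow> bool" where
  "visc_supersol \<Lambda> \<Omega> u =
    (lsc_on (closure \<Omega>) u \<and>
     (\<forall>x0\<in>\<Omega>. \<forall>\<phi>. Ck_on 2 \<Omega> \<phi> \<and> \<phi> x0 = u x0 \<and> (\<forall>x\<in>\<Omega>. x \<noteq> x0 \<longrightarrow> u x > \<phi> x)
        \<longrightarrow> opE \<Lambda> (\<phi> x0) (grad \<phi> x0) (hess \<phi> x0) \<ge> 0) \<and>
     (\<forall>x0\<in>frontier \<Omega>. \<forall>\<phi>. C2_closure \<Omega> \<phi> \<and> \<phi> x0 = u x0 \<and>
          (\<forall>x\<in>closure \<Omega>. x \<noteq> x0 \<longrightarrow> u x > \<phi> x)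
        \<longrightarrow> max (opE \<Lambda> (\<phi> x0) (grad \<phi> x0) (hess \<phi> x0)) (normal_deriv \<Omega> \<phi> x0) \<ge> 0))"

definition visc_sol :: "real \<Rightarrow> 'a::euclidean_space set \<Rightarrow> ('a \<Rightarrow> real) \<Rightarrow> bool" where
  "visc_sol \<Lambda> \<Omega> u = (continuous_on (closure \<Omega>) u \<and> visc_subsol \<Lambda> \<Omega> u \<and> visc_supersol \<Lambda> \<Omega> u)"

end

theory Submission
  imports Defs
begin

text \<open>
  Suppose u(x0) \<le> m for some x0 in Omega1; since u \<ge> m on the
  closure of Omega1, x0 is a local minimum of u with value m > 0.  A viscosity
  supersolution of (N_Lambda) with Lambda > 0 cannot have a positive interior local
  minimum: the downward paraboloid  m - C |x - x0|^2  (C large, using a lower bound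
  of u on Omega) touches u strictly from below at x0, is C^2, has zero gradient
  at x0, and there  F(m, 0, X) = min(-Lambda m, 0) < 0,  contradicting the
  supersolution inequality F \<ge> 0.
\<close>

lemma grad_eqI:
  fixes f :: "'a::euclidean_space \<Rightarrow> real"
  assumes deriv: "(f has_derivative (\<lambda>h. g \<bullet> h)) (at x)"
  shows "grad f x = g"
proof -
  let ?g = "SOME g. (f has_derivative (\<lambda>h. g \<bullet> h)) (at x)"
  have "(f has_derivative (\<lambda>h. ?g \<bullet> h)) (at x)"
    using someI_ex[of "\<lambda>g. (f has_derivative (\<lambda>h. g \<bullet> h)) (at x)"] deriv by blast
  then have "(\<lambda>h. ?g \<bullet> h) = (\<lambda>h. g \<bullet> h)"
    using has_derivative_unique deriv by blast
  then have "?g \<bullet> (?g - g) = g \<bullet> (?g - g)" by metis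
  then have "(?g - g) \<bullet> (?g - g) = 0" by (simp add: inner_diff_left)
  then show ?thesis unfolding grad_def by simp
qed

definition paraboloid :: "real \<Rightarrow> real \<Rightarrow> 'a::euclidean_space \<Rightarrow> 'a \<Rightarrow> real" where
  "paraboloid m C x0 x = m - C * ((x - x0) \<bullet> (x - x0))"

lemma paraboloid_has_derivative:
  "(paraboloid m C x0 has_derivative (\<lambda>h. (- (2 * C) *\<^sub>R (x - x0)) \<bullet> h)) (at x)"
proof -
  have "(paraboloid m C x0 has_derivative
          (\<lambda>h. 0 - C * ((x - x0) \<bullet> h + h \<bullet> (x - x0)))) (at x)"
    unfolding paraboloid_def by (auto intro!: derivative_eq_intros)
  moreover have "(\<lambda>h. 0 - C * ((x - x0) \<bullet> h + h \<bullet> (x - x0)))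
                 = (\<lambda>h. (- (2 * C) *\<^sub>R (x - x0)) \<bullet> h)"
    by (rule ext) (simp add: inner_commute algebra_simps)
  ultimately show ?thesis by simp
qed

lemma grad_paraboloid: "grad (paraboloid m C x0) x = - (2 * C) *\<^sub>R (x - x0)"
  by (rule grad_eqI[OF paraboloid_has_derivative])

lemma affine_has_derivative:
  fixes x0 v :: "'a::euclidean_space"
  shows "((\<lambda>x. (c *\<^sub>R (x - x0)) \<bullet> v) has_derivative (\<lambda>h. (c *\<^sub>R v) \<bullet> h)) (at x)"
proof -
  have "((\<lambda>x. c * ((x - x0) \<bullet> v)) has_derivative (\<lambda>h. c * (h \<bullet> v))) (at x)"
    by (auto intro!: derivative_eq_intros)
  then show ?thesis by (simp add: inner_commute)
qed

lemma paraboloid_C2: "Ck_on 2 S (paraboloid m C x0)"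
proof -
  let ?c = "- (2 * C)"
  have grad_dir: "(\<lambda>x. grad (paraboloid m C x0) x \<bullet> v) = (\<lambda>x. (?c *\<^sub>R (x - x0)) \<bullet> v)" for v
    by (simp add: grad_paraboloid)
  have "grad (\<lambda>x. (?c *\<^sub>R (x - x0)) \<bullet> v) x = ?c *\<^sub>R v" for v x
    by (rule grad_eqI[OF affine_has_derivative])
  then have "Ck_on 1 S (\<lambda>x. (?c *\<^sub>R (x - x0)) \<bullet> v)" for v
    using affine_has_derivative[of ?c x0 v] by (auto simp: differentiable_def)
  moreover have "\<forall>x\<in>S. paraboloid m C x0 differentiable (at x)"
    using paraboloid_has_derivative unfolding differentiable_def by blast
  ultimately have "Ck_on (Suc 1) S (paraboloid m C x0)"
    unfolding Ck_on.simps(2)[of 1] grad_dir by blast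
  then show ?thesis by (simp add: numeral_2_eq_2 del: Ck_on.simps)
qed

lemma opE_flat_positive:
  assumes "\<Lambda> > 0" and "s > 0"
  shows "opE \<Lambda> s 0 X < 0"
  using assms by (simp add: opE_def opF_def min_def)

text \<open>A paraboloid with apex at a local minimum of u, opened wide enough to pass
  below a global lower bound of u outside the ball, touches u strictly from below.\<close>
lemma paraboloid_below_local_min:
  fixes u :: "'a::euclidean_space \<Rightarrow> real"
  assumes r: "r > 0" and lower: "\<forall>x\<in>S. u x \<ge> L"
    and min: "\<forall>x\<in>ball x0 r. u x \<ge> u x0" and L: "L \<le> u x0"
  defines "C \<equiv> (u x0 - L + 1) / r^2"
  shows "\<forall>x\<in>S. x \<noteq> x0 \<longrightarrow> u x > paraboloid (u x0) C x0 x"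
proof (intro ballI impI)
  fix x assume x: "x \<in> S" "x \<noteq> x0"
  have C_pos: "C > 0" unfolding C_def using r L by simp
  have sq: "(x - x0) \<bullet> (x - x0) = (dist x x0)^2"
    by (simp add: dist_norm power2_norm_eq_inner)
  show "u x > paraboloid (u x0) C x0 x"
  proof (cases "dist x x0 < r")
    case True
    then have "u x \<ge> u x0" using min by (simp add: dist_commute)
    moreover have "C * ((x - x0) \<bullet> (x - x0)) > 0" using C_pos x(2) by simp
    ultimately show ?thesis unfolding paraboloid_def by simp
  next
    case False
    then have "C * r^2 \<le> C * ((x - x0) \<bullet> (x - x0))"
      using r C_pos sq by (simp add: power_mono)
    moreover have "C * r^2 = u x0 - L + 1" unfolding C_def using r by simp
    moreover have "u x \<ge> L" using lower x(1) by blast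
    ultimately show ?thesis unfolding paraboloid_def by linarith
  qed
qed

lemma supersol_no_positive_local_min:
  fixes u :: "'a::euclidean_space \<Rightarrow> real"
  assumes super: "visc_supersol \<Lambda> \<Omega> u" and \<Lambda>: "\<Lambda> > 0"
    and lower: "\<forall>x\<in>\<Omega>. u x \<ge> L"
    and x0: "x0 \<in> \<Omega>" and r: "r > 0" and min: "\<forall>x\<in>ball x0 r. u x \<ge> u x0"
    and pos: "u x0 > 0"
  shows False
proof -
  define C where "C = (u x0 - L + 1) / r^2"
  let ?\<phi> = "paraboloid (u x0) C x0"
  have touches: "\<forall>x\<in>\<Omega>. x \<noteq> x0 \<longrightarrow> u x > ?\<phi> x"
    using paraboloid_below_local_min[OF r lower min] lower x0 unfolding C_def by blast
  have "?\<phi> x0 = u x0" by (simp add: paraboloid_def)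
  then have "opE \<Lambda> (?\<phi> x0) (grad ?\<phi> x0) (hess ?\<phi> x0) \<ge> 0"
    using super x0 touches paraboloid_C2 unfolding visc_supersol_def by blast
  moreover have "opE \<Lambda> (?\<phi> x0) (grad ?\<phi> x0) (hess ?\<phi> x0) < 0"
    using opE_flat_positive[OF \<Lambda> pos] by (simp add: grad_paraboloid paraboloid_def)
  ultimately show False by simp
qed

lemma continuous_closure_bounded_below:
  fixes u :: "'a::euclidean_space \<Rightarrow> real"
  assumes "bounded \<Omega>" and "continuous_on (closure \<Omega>) u"
  obtains L where "\<forall>x\<in>\<Omega>. u x \<ge> L"
proof -
  have "bounded (u ` closure \<Omega>)"
    using assms compact_closure compact_continuous_image compact_imp_bounded by blast
  then obtain B where "\<forall>x\<in>closure \<Omega>. \<bar>u x\<bar> \<le> B"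
    unfolding bounded_iff by auto
  then have "\<forall>x\<in>\<Omega>. u x \<ge> - B" using closure_subset by force
  then show ?thesis using that by blast
qed

theorem lemma3:
  fixes \<Omega> \<Omega>1 :: "'a::euclidean_space set" and u :: "'a \<Rightarrow> real" and \<Lambda> m :: real
  assumes "open \<Omega>" and "bounded \<Omega>" and "convex \<Omega>" and "smooth_boundary \<Omega>"
    and "\<Lambda> > 0"
    and "visc_sol \<Lambda> \<Omega> u"
    and "\<not> (\<exists>c. \<forall>x\<in>closure \<Omega>. u x = c)"
    and "open \<Omega>1" and "connected \<Omega>1" and "\<Omega>1 \<subseteq> \<Omega>"
    and "m > 0" and "\<forall>x\<in>closure \<Omega>1. u x \<ge> m"
  shows "\<forall>x\<in>\<Omega>1. u x > m"
proof (rule ccontr)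
  assume "\<not> (\<forall>x\<in>\<Omega>1. u x > m)"
  then obtain x0 where x0: "x0 \<in> \<Omega>1" "\<not> u x0 > m" by blast
  have ge_m: "\<forall>x\<in>\<Omega>1. u x \<ge> m" using assms(12) closure_subset by blast
  then have ux0: "u x0 = m" using x0 by force
  obtain r where r: "r > 0" "ball x0 r \<subseteq> \<Omega>1"
    using x0(1) assms(8) open_contains_ball by blast
  have local_min: "\<forall>x\<in>ball x0 r. u x \<ge> u x0" using r(2) ge_m ux0 by auto
  obtain L where "\<forall>x\<in>\<Omega>. u x \<ge> L"
    using continuous_closure_bounded_below assms(2,6) unfolding visc_sol_def by blast
  moreover have "visc_supersol \<Lambda> \<Omega> u" using assms(6) unfolding visc_sol_def by blast
  ultimately show False
    using supersol_no_positive_local_min[OF _ assms(5) _ _ r(1) local_min] x0(1) assms(10,11) ux0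
    by blast
qed

end
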